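(* Let $n,t\ge1$ and $q,b\ge2$. Let $\boldsymbol{x}\in\Sigma_q^n$ and $\mathcal{U}\subseteq\mathcal{I}_{t,b}(\boldsymbol{x})$. For every $\alpha\in\Sigma_q\setminus\{x_1\}$ we have $|\mathcal{U}^{\alpha\succ x_1,b}|\le\frac12 N_{q,b}^+(n,t)$. Consequently, if $|\mathcal{U}|\ge N_{q,b}^+(n,t)+1$, then $|\mathcal{U}^{\alpha\succ x_1,b}|<|\mathcal{U}^{x_1\succ\alpha,b}|$ for every $\alpha\in\Sigma_q\setminus\{x_1\}$.
   Context: $\Sigma_q=\{0,\ldots,q-1\}$. A $b$-burst-insertion at position $i\in[1,n+1]$ transforms $x_1\cdots x_n$ into $x_1\cdots x_{i-1}y_1\cdots y_b x_i\cdots x_n$ for arbitrary $y_1\cdots y_b\in\Sigma_q^b$. $\mathcal{I}_{t,b}(\boldsymbol{x})$ is the set of all length-$(n+tb)$ sequences obtainable from $\boldsymbol{x}$ by $t$ successive $b$-burst-insertions. $N_{q,b}^+(n,t)=\max\{|\mathcal{I}_{t,b}(\boldsymbol{x})\cap\mathcal{I}_{t,b}(\boldsymbol{y})|:\boldsymbol{x}\ne\boldsymbol{y}\in\Sigma_q^n\}$. For $\mathcal{U}\subseteq\Sigma_q^{n+tb}$ and distinct $\alpha,\beta\in\Sigma_q$, $\mathcal{U}^{\alpha\succ\beta,b}$ is the set of $\boldsymbol{y}\in\mathcal{U}$ for which there is $i\in[1,t+1]$ with $y_{(i-1)b+1}=\alpha$ and $y_{(j-1)b+1}\notin\{\alpha,\beta\}$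 for all $j\in[1,i-1]$ (i.e., among positions $1,b+1,\ldots,tb+1$, the symbol $\alpha$ appears before $\beta$). *)

theory Defs
  imports Main
begin

definition seqs :: "nat \<Rightarrow> nat \<Rightarrow> nat list set" where
  "seqs q n = {xs. length xs = n \<and> set xs \<subseteq> {..<q}}"

definition burst_ins :: "nat \<Rightarrow> nat \<Rightarrow> nat list \<Rightarrow> nat list set" where
  "burst_ins q b xs = {take i xs @ ys @ drop i xs | i ys. i \<le> length xs \<and> ys \<in> seqs q b}"

fun ins_set :: "nat \<Rightarrow> nat \<Rightarrow> nat \<Rightarrow> nat list \<Rightarrow> nat list set" where
  "ins_set q b 0 xs = {xs}"
| "ins_set q b (Suc t) xs = (\<Union>zs \<in> ins_set q b t xs. burst_ins q b zs)"

definition Nplus :: "nat \<Rightarrow> nat \<Rightarrow> nat \<Rightarrow> nat \<Rightarrow> nat" where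
  "Nplus q b n t = Max {card (ins_set q b t x \<inter> ins_set q b t y) | x y.
       x \<in> seqs q n \<and> y \<in> seqs q n \<and> x \<noteq> y}"

text \<open>U^{alpha > beta, b}: among (1-indexed) positions 1, b+1, ..., tb+1, i.e. 0-indexed
  positions j*b for j = 0..t, the symbol alpha occurs before beta.\<close>
definition prec_set :: "nat list set \<Rightarrow> nat \<Rightarrow> nat \<Rightarrow> nat \<Rightarrow> nat \<Rightarrow> nat list set" where
  "prec_set U t b \<alpha> \<beta> = {y \<in> U. \<exists>i \<le> t. y ! (i * b) = \<alpha> \<and>
       (\<forall>j < i. y ! (j * b) \<notin> {\<alpha>, \<beta>})}"

end

theory Submission
  imports Defs "HOL-Combinatorics.Transposition"
begin

text \<open>Write \<open>x = c x'\<close> and \<open>z = \<alpha> x'\<close>. A sequence \<open>y\<close> lies in \<open>I\<^sub>t(d x')\<close> iff some block start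
  \<open>kb\<close> (\<open>k \<le> t\<close>) carries \<open>d\<close> and the suffix after it lies in \<open>I\<^sub>t\<^sub>-\<^sub>k(x')\<close>; such an anchor can be
  moved to any earlier block start, the skipped symbols being reinterpreted as inserted bursts.
  If \<open>\<alpha>\<close> precedes \<open>c\<close> in \<open>y \<in> I\<^sub>t(x)\<close>, then the first \<open>c\<close> is an anchor, so \<open>y \<in> I\<^sub>t(z)\<close> as well;
  exchanging \<open>\<alpha>\<close> and \<open>c\<close> at all block starts up to that first \<open>c\<close> yields another element of
  \<open>I\<^sub>t(x) \<inter> I\<^sub>t(z)\<close>, in which now \<open>c\<close> precedes \<open>\<alpha>\<close>. This exchange is injective, hence
  \<open>2 |U\<^sup>\<alpha>\<^sup>\<succ>\<^sup>c| \<le> |I\<^sub>t(x) \<inter> I\<^sub>t(z)| \<le> N\<^sup>+\<close>. Since every element of \<open>I\<^sub>t(x)\<close> carries \<open>c\<close> at some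
  block start, \<open>U\<close> is the disjoint union of \<open>U\<^sup>\<alpha>\<^sup>\<succ>\<^sup>c\<close> and \<open>U\<^sup>c\<^sup>\<succ>\<^sup>\<alpha>\<close>, which gives the second claim.\<close>

lemma finite_seqs: "finite (seqs q n)"
proof -
  have "seqs q n = {xs. set xs \<subseteq> {..<q} \<and> length xs = n}" by (auto simp: seqs_def)
  then show ?thesis using finite_lists_length_eq[of "{..<q}" n] by simp
qed

lemma length_ins_set: "ys \<in> ins_set q b t xs \<Longrightarrow> length ys = length xs + t * b"
  by (induction t arbitrary: ys) (auto simp: burst_ins_def seqs_def)

lemma set_ins_set_subset:
  "set xs \<subseteq> {..<q} \<Longrightarrow> ys \<in> ins_set q b t xs \<Longrightarrow> set ys \<subseteq> {..<q}"
proof (induction t arbitrary: ys)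
  case (Suc t)
  then show ?case
    by (fastforce simp: burst_ins_def seqs_def dest: in_set_takeD in_set_dropD)
qed simp

lemma finite_ins_set: "finite (ins_set q b t xs)"
proof (induction t)
  case (Suc t)
  have "burst_ins q b zs = (\<lambda>(i, ys). take i zs @ ys @ drop i zs) ` ({..length zs} \<times> seqs q b)"
    for zs by (auto simp: burst_ins_def)
  then show ?case using Suc finite_seqs by simp
qed simp

lemma ins_set_trans:
  "v \<in> ins_set q b t2 w \<Longrightarrow> w \<in> ins_set q b t1 a \<Longrightarrow> v \<in> ins_set q b (t1 + t2) a"
  by (induction t2 arbitrary: v) auto

lemma ins_set_append_right: "u \<in> ins_set q b t a \<Longrightarrow> u @ c \<in> ins_set q b t (a @ c)"
proof (induction t arbitrary: u)
  case (Suc t)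
  then obtain zs i ys where zs: "zs \<in> ins_set q b t a" and u: "u = take i zs @ ys @ drop i zs"
    and "i \<le> length zs" and "ys \<in> seqs q b" by (auto simp: burst_ins_def)
  then have "u @ c \<in> burst_ins q b (zs @ c)"
    unfolding burst_ins_def by (intro CollectI exI[of _ i] exI[of _ ys]) simp
  then show ?case using Suc.IH[OF zs] by auto
qed simp

lemma ins_set_append_left: "u \<in> ins_set q b t a \<Longrightarrow> c @ u \<in> ins_set q b t (c @ a)"
proof (induction t arbitrary: u)
  case (Suc t)
  then obtain zs i ys where zs: "zs \<in> ins_set q b t a" and u: "u = take i zs @ ys @ drop i zs"
    and "i \<le> length zs" and "ys \<in> seqs q b" by (auto simp: burst_ins_def)
  then have "c @ u \<in> burst_ins q b (c @ zs)"
    unfolding burst_ins_def by (intro CollectI exI[of _ "length c + i"] exI[of _ ys]) simp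
  then show ?case using Suc.IH[OF zs] by auto
qed simp

lemma ins_set_append:
  "u \<in> ins_set q b t1 a \<Longrightarrow> v \<in> ins_set q b t2 c \<Longrightarrow> u @ v \<in> ins_set q b (t1 + t2) (a @ c)"
  using ins_set_trans[OF ins_set_append_left ins_set_append_right] by simp

lemma ins_set_Nil:
  "length w = m * b \<Longrightarrow> set w \<subseteq> {..<q} \<Longrightarrow> w \<in> ins_set q b m []"
proof (induction m arbitrary: w)
  case (Suc m)
  have rest: "drop b w \<in> ins_set q b m []"
    using Suc by (intro Suc.IH) (auto dest: in_set_dropD)
  have "take b w \<in> seqs q b" using Suc.prems by (auto simp: seqs_def dest: in_set_takeD)
  then have "w \<in> burst_ins q b (drop b w)"
    unfolding burst_ins_def by (intro CollectI exI[of _ 0] exI[of _ "take b w"]) simp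
  then show ?case using rest by auto
qed simp

lemma ins_set_Cons_split:
  "y \<in> ins_set q b t (d # x') \<Longrightarrow>
     \<exists>k\<le>t. \<exists>w R. y = w @ d # R \<and> length w = k * b \<and> R \<in> ins_set q b (t - k) x'"
proof (induction t arbitrary: y)
  case (Suc t)
  then obtain zs i ys where zs: "zs \<in> ins_set q b t (d # x')" and y: "y = take i zs @ ys @ drop i zs"
    and i: "i \<le> length zs" and ys: "ys \<in> seqs q b" by (auto simp: burst_ins_def)
  obtain k w R where k: "k \<le> t" and zs_eq: "zs = w @ d # R" and w: "length w = k * b"
    and R: "R \<in> ins_set q b (t - k) x'" using Suc.IH[OF zs] by blast
  show ?case
  proof (cases "i \<le> length w")
    case True
    then have "y = (take i w @ ys @ drop i w) @ d # R" and "length (take i w @ ys @ drop i w) = Suc k * b"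
      using y zs_eq w ys by (simp_all add: seqs_def)
    with k R show ?thesis
      by (intro exI[of _ "Suc k"] conjI exI[of _ "take i w @ ys @ drop i w"] exI[of _ R]) auto
  next
    case False
    define i' where "i' = i - length w - 1"
    have i_eq: "i = length w + 1 + i'" using False by (simp add: i'_def)
    then have "y = w @ d # (take i' R @ ys @ drop i' R)" using y zs_eq by simp
    moreover have "take i' R @ ys @ drop i' R \<in> burst_ins q b R"
      using i i_eq zs_eq ys unfolding burst_ins_def by auto
    then have "take i' R @ ys @ drop i' R \<in> ins_set q b (Suc t - k) x'"
      using R k Suc_diff_le by auto
    ultimately show ?thesis using k w by (intro exI[of _ k]) auto
  qed
qed force

lemma ins_set_Cons_anchor:
  "y \<in> ins_set q b t (d # x') \<Longrightarrow> \<exists>k\<le>t. y ! (k * b) = d \<and> drop (k * b + 1) y \<in> ins_set q b (t - k) x'"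
proof -
  assume "y \<in> ins_set q b t (d # x')"
  then obtain k w R where "k \<le> t" "y = w @ d # R" "length w = k * b" "R \<in> ins_set q b (t - k) x'"
    using ins_set_Cons_split by blast
  then show ?thesis by (intro exI[of _ k]) (auto simp: nth_append)
qed

lemma block_start_less_length:
  "y \<in> ins_set q b t (d # x') \<Longrightarrow> k \<le> t \<Longrightarrow> k * b < length y"
proof -
  assume "y \<in> ins_set q b t (d # x')" and "k \<le> t"
  then have "length y = Suc (length x') + t * b" and "k * b \<le> t * b"
    by (simp_all add: length_ins_set)
  then show ?thesis by linarith
qed

lemma ins_set_drop_earlier:
  assumes "set y \<subseteq> {..<q}" and "h \<le> k" and "k * b < length y"
    and "drop (k * b + 1) y \<in> ins_set q b s x'"
  shows "drop (h * b + 1) y \<in> ins_set q b (k - h + s) x'"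
proof -
  define m where "m = drop (h * b + 1) (take (k * b + 1) y)"
  have hk: "h * b \<le> k * b" using assms(2) by simp
  have "drop (h * b + 1) y = drop (h * b + 1) (take (k * b + 1) y @ drop (k * b + 1) y)"
    by simp
  also have "\<dots> = m @ drop (h * b + 1 - length (take (k * b + 1) y)) (drop (k * b + 1) y)"
    unfolding m_def by (rule drop_append)
  also have "h * b + 1 - length (take (k * b + 1) y) = 0"
    using hk assms(3) by simp
  finally have "drop (h * b + 1) y = m @ drop (k * b + 1) y" by simp
  moreover have "m \<in> ins_set q b (k - h) []"
    using assms(1,3) hk unfolding m_def
    by (intro ins_set_Nil) (auto simp: diff_mult_distrib dest: in_set_dropD in_set_takeD)
  ultimately show ?thesis using ins_set_append[OF _ assms(4)] by fastforce
qed

lemma ins_set_Cons_of_drop: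
  assumes "set y \<subseteq> {..<q}" and "h * b < length y"
    and "drop (h * b + 1) y \<in> ins_set q b s x'"
  shows "y \<in> ins_set q b (h + s) (y ! (h * b) # x')"
proof -
  have "take (h * b) y \<in> ins_set q b h []"
    using assms(1,2) by (intro ins_set_Nil) (auto dest: in_set_takeD)
  from ins_set_append[OF this ins_set_append_left[OF assms(3), of "[y ! (h * b)]"]]
  show ?thesis using id_take_nth_drop[OF assms(2)] by simp
qed

lemma ins_set_Cons_of_anchor:
  assumes "set y \<subseteq> {..<q}" and "h \<le> k" and "k \<le> t" and "k * b < length y"
    and "drop (k * b + 1) y \<in> ins_set q b (t - k) x'"
  shows "y \<in> ins_set q b t (y ! (h * b) # x')"
proof -
  have "h * b < length y" using assms(2,4) mult_le_mono1[of h k b] by linarith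
  with assms ins_set_drop_earlier[OF assms(1,2,4,5)] show ?thesis
    using ins_set_Cons_of_drop[of y q h b "k - h + (t - k)" x'] by simp
qed

definition first_block :: "nat \<Rightarrow> nat \<Rightarrow> nat \<Rightarrow> nat list \<Rightarrow> nat" where
  "first_block b t v y = (LEAST k. k \<le> t \<and> y ! (k * b) = v)"

lemma first_block:
  assumes "k \<le> t" and "y ! (k * b) = v"
  shows "first_block b t v y \<le> k" and "y ! (first_block b t v y * b) = v"
    and "\<And>j. j < first_block b t v y \<Longrightarrow> y ! (j * b) \<noteq> v"
proof -
  show "first_block b t v y \<le> k"
    unfolding first_block_def by (rule Least_le) (use assms in auto)
  show "y ! (first_block b t v y * b) = v"
    unfolding first_block_def by (rule LeastI2[of _ k]) (use assms in auto)
  fix j assume j: "j < first_block b t v y"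
  then have "j \<le> t" using \<open>first_block b t v y \<le> k\<close> assms(1) by linarith
  then show "y ! (j * b) \<noteq> v"
    using not_less_Least[of j "\<lambda>k. k \<le> t \<and> y ! (k * b) = v"] j unfolding first_block_def by blast
qed

lemma first_block_eqI:
  "k \<le> t \<Longrightarrow> y ! (k * b) = v \<Longrightarrow> (\<And>j. j < k \<Longrightarrow> y ! (j * b) \<noteq> v) \<Longrightarrow> first_block b t v y = k"
  unfolding first_block_def by (rule Least_equality) (auto simp: not_le[symmetric])

lemma first_block_anchor:
  assumes "set (c # x') \<subseteq> {..<q}" and y: "y \<in> ins_set q b t (c # x')"
  defines "k \<equiv> first_block b t c y"
  shows "k \<le> t" and "y ! (k * b) = c" and "\<And>j. j < k \<Longrightarrow> y ! (j * b) \<noteq> c"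
    and "drop (k * b + 1) y \<in> ins_set q b (t - k) x'"
proof -
  obtain k0 where k0: "k0 \<le> t" "y ! (k0 * b) = c" "drop (k0 * b + 1) y \<in> ins_set q b (t - k0) x'"
    using ins_set_Cons_anchor[OF y] by blast
  note first = first_block[OF k0(1,2), folded k_def]
  show "k \<le> t" "y ! (k * b) = c" "\<And>j. j < k \<Longrightarrow> y ! (j * b) \<noteq> c"
    using first k0(1) by auto
  show "drop (k * b + 1) y \<in> ins_set q b (t - k) x'"
    using ins_set_drop_earlier[OF set_ins_set_subset[OF assms(1) y] first(1)
        block_start_less_length[OF y k0(1)] k0(3)] first(1) k0(1) by simp
qed

definition swap_blocks :: "nat \<Rightarrow> nat \<Rightarrow> nat \<Rightarrow> nat \<Rightarrow> nat list \<Rightarrow> nat list" where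
  "swap_blocks b K a c y =
     map (\<lambda>i. if i mod b = 0 \<and> i div b \<le> K then Transposition.transpose a c (y ! i) else y ! i)
       [0..<length y]"

lemma length_swap_blocks [simp]: "length (swap_blocks b K a c y) = length y"
  by (simp add: swap_blocks_def)

lemma nth_swap_blocks:
  "i < length y \<Longrightarrow> swap_blocks b K a c y ! i =
     (if i mod b = 0 \<and> i div b \<le> K then Transposition.transpose a c (y ! i) else y ! i)"
  by (simp add: swap_blocks_def)

lemma swap_blocks_involutory [simp]: "swap_blocks b K a c (swap_blocks b K a c y) = y"
  by (rule nth_equalityI) (auto simp: nth_swap_blocks)

lemma nth_swap_blocks_block:
  "0 < b \<Longrightarrow> j \<le> K \<Longrightarrow> j * b < length y \<Longrightarrow>
     swap_blocks b K a c y ! (j * b) = Transposition.transpose a c (y ! (j * b))"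
  by (simp add: nth_swap_blocks)

lemma drop_swap_blocks: "0 < b \<Longrightarrow> drop (K * b + 1) (swap_blocks b K a c y) = drop (K * b + 1) y"
proof (rule nth_equalityI)
  fix i assume "0 < b" and "i < length (drop (K * b + 1) (swap_blocks b K a c y))"
  then have i: "K * b + 1 + i < length y" by simp
  have "\<not> ((K * b + 1 + i) mod b = 0 \<and> (K * b + 1 + i) div b \<le> K)"
  proof
    assume "(K * b + 1 + i) mod b = 0 \<and> (K * b + 1 + i) div b \<le> K"
    then have "K * b + 1 + i = (K * b + 1 + i) div b * b" and "(K * b + 1 + i) div b * b \<le> K * b"
      by (metis add_0 mod_div_mult_eq, simp)
    then show False by linarith
  qed
  then have "swap_blocks b K a c y ! (K * b + 1 + i) = y ! (K * b + 1 + i)"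
    unfolding nth_swap_blocks[OF i] by (rule if_not_P)
  then show "drop (K * b + 1) (swap_blocks b K a c y) ! i = drop (K * b + 1) y ! i"
    using i by simp
qed simp

lemma set_swap_blocks_subset:
  "a < q \<Longrightarrow> c < q \<Longrightarrow> set y \<subseteq> {..<q} \<Longrightarrow> set (swap_blocks b K a c y) \<subseteq> {..<q}"
proof -
  assume "a < q" "c < q" "set y \<subseteq> {..<q}"
  then have "\<And>i. i < length y \<Longrightarrow> y ! i < q" by (meson lessThan_iff nth_mem subsetD)
  with \<open>a < q\<close> \<open>c < q\<close> show ?thesis by (auto simp: swap_blocks_def transpose_def)
qed

lemma prec_set_subset: "prec_set U t b a c \<subseteq> U"
  unfolding prec_set_def by blast

lemma prec_set_mono: "U \<subseteq> V \<Longrightarrow> prec_set U t b a c \<subseteq> prec_set V t b a c"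
  unfolding prec_set_def by blast

lemma prec_set_disjoint: "a \<noteq> c \<Longrightarrow> prec_set U t b a c \<inter> prec_set U t b c a = {}"
proof (rule equals0I)
  fix y assume "a \<noteq> c" and "y \<in> prec_set U t b a c \<inter> prec_set U t b c a"
  then obtain i1 i2 where "y ! (i1 * b) = a" "\<forall>j<i1. y ! (j * b) \<notin> {a, c}"
    and "y ! (i2 * b) = c" "\<forall>j<i2. y ! (j * b) \<notin> {c, a}" unfolding prec_set_def by blast
  with \<open>a \<noteq> c\<close> show False by (cases i1 i2 rule: linorder_cases) auto
qed

lemma prec_set_Un:
  assumes "\<And>y. y \<in> U \<Longrightarrow> \<exists>k\<le>t. y ! (k * b) = c"
  shows "U = prec_set U t b a c \<union> prec_set U t b c a"
proof (intro equalityI subsetI)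
  fix y assume y: "y \<in> U"
  define P where "P i \<longleftrightarrow> i \<le> t \<and> y ! (i * b) \<in> {a, c}" for i
  define i where "i = (LEAST i. P i)"
  obtain k where "P k" using assms[OF y] unfolding P_def by blast
  then have "P i" unfolding i_def by (rule LeastI)
  have before: "y ! (j * b) \<noteq> a \<and> y ! (j * b) \<noteq> c" if "j < i" for j
  proof -
    have "\<not> P j" using that unfolding i_def by (rule not_less_Least)
    moreover have "j \<le> t" using \<open>P i\<close> that unfolding P_def by simp
    ultimately show ?thesis unfolding P_def by blast
  qed
  consider "y ! (i * b) = a" | "y ! (i * b) = c" using \<open>P i\<close> unfolding P_def by blast
  then show "y \<in> prec_set U t b a c \<union> prec_set U t b c a"
  proof cases
    case 1
    then have "y \<in> prec_set U t b a c" using y \<open>P i\<close> before unfolding prec_set_def P_def by blast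
    then show ?thesis by blast
  next
    case 2
    then have "y \<in> prec_set U t b c a" using y \<open>P i\<close> before unfolding prec_set_def P_def by blast
    then show ?thesis by blast
  qed
qed (auto simp: prec_set_def)

text \<open>No earlier block start carries \<open>c\<close>, so the exchanged block becomes the first \<open>\<alpha>\<close> of the image;
  this is what makes the exchange invertible (last claim).\<close>

lemma swap_blocks_prec_set:
  assumes x: "set (c # x') \<subseteq> {..<q}" and "\<alpha> < q" and "\<alpha> \<noteq> c" and "0 < b"
    and "y \<in> prec_set (ins_set q b t (c # x')) t b \<alpha> c"
  defines "w \<equiv> swap_blocks b (first_block b t c y) \<alpha> c y"
  shows "y \<in> ins_set q b t (\<alpha> # x')"
    and "w \<in> ins_set q b t (c # x') \<inter> ins_set q b t (\<alpha> # x')"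
    and "w \<in> prec_set (ins_set q b t (c # x')) t b c \<alpha>"
    and "first_block b t \<alpha> w = first_block b t c y"
proof -
  define k where "k = first_block b t c y"
  note w_def = w_def[folded k_def]
  obtain i where y: "y \<in> ins_set q b t (c # x')" and i: "i \<le> t" "y ! (i * b) = \<alpha>"
    and before_i: "\<forall>j<i. y ! (j * b) \<notin> {\<alpha>, c}"
    using assms(5) unfolding prec_set_def by blast
  note anchor = first_block_anchor[OF x y, folded k_def]
  have "i < k"
  proof (rule ccontr)
    assume "\<not> i < k"
    then have "k < i \<or> k = i" by linarith
    then show False using anchor(2) before_i i(2) \<open>\<alpha> \<noteq> c\<close> by auto
  qed
  have y_set: "set y \<subseteq> {..<q}" using set_ins_set_subset[OF x y] .
  have k_len: "k * b < length y" using block_start_less_length[OF y anchor(1)] .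
  show "y \<in> ins_set q b t (\<alpha> # x')"
    using ins_set_Cons_of_anchor[OF y_set less_imp_le[OF \<open>i < k\<close>] anchor(1) k_len anchor(4)] i(2)
    by simp
  have w_set: "set w \<subseteq> {..<q}"
    unfolding w_def using set_swap_blocks_subset[OF \<open>\<alpha> < q\<close> _ y_set] x by simp
  have w_len: "k * b < length w" using k_len by (simp add: w_def)
  have w_drop: "drop (k * b + 1) w \<in> ins_set q b (t - k) x'"
    using anchor(4) drop_swap_blocks[OF \<open>0 < b\<close>] by (simp add: w_def)
  have w_block: "w ! (j * b) = Transposition.transpose \<alpha> c (y ! (j * b))" if "j \<le> k" for j
  proof -
    have "j * b < length y" using mult_le_mono1[OF that, of b] k_len by linarith
    then show ?thesis unfolding w_def using nth_swap_blocks_block[OF \<open>0 < b\<close> that] by blast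
  qed
  have w_k: "w ! (k * b) = \<alpha>" and w_i: "w ! (i * b) = c"
    using w_block[of k] w_block[of i] anchor(2) i(2) \<open>i < k\<close> by simp_all
  have w_in_c: "w \<in> ins_set q b t (c # x')"
    using ins_set_Cons_of_anchor[OF w_set less_imp_le[OF \<open>i < k\<close>] anchor(1) w_len w_drop] w_i
    by simp
  moreover have "w \<in> ins_set q b t (\<alpha> # x')"
    using ins_set_Cons_of_anchor[OF w_set order_refl anchor(1) w_len w_drop] w_k by simp
  ultimately show "w \<in> ins_set q b t (c # x') \<inter> ins_set q b t (\<alpha> # x')" by blast
  have "\<forall>j<i. w ! (j * b) \<notin> {c, \<alpha>}"
    using w_block before_i \<open>i < k\<close> by (auto simp: transpose_eq_iff)
  then show "w \<in> prec_set (ins_set q b t (c # x')) t b c \<alpha>"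
    unfolding prec_set_def using w_in_c i(1) w_i by blast
  show "first_block b t \<alpha> w = first_block b t c y"
    unfolding k_def[symmetric]
  proof (rule first_block_eqI[OF anchor(1) w_k])
    fix j assume "j < k"
    then show "w ! (j * b) \<noteq> \<alpha>" using w_block[of j] anchor(3)[of j] \<open>\<alpha> \<noteq> c\<close> by (auto simp: transpose_eq_iff)
  qed
qed

lemma two_card_prec_set_le_card_Int:
  assumes "set (c # x') \<subseteq> {..<q}" and "\<alpha> < q" and "\<alpha> \<noteq> c" and "0 < b"
  shows "2 * card (prec_set (ins_set q b t (c # x')) t b \<alpha> c)
    \<le> card (ins_set q b t (c # x') \<inter> ins_set q b t (\<alpha> # x'))"
proof -
  let ?I = "ins_set q b t (c # x') \<inter> ins_set q b t (\<alpha> # x')"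
  define S where "S = prec_set (ins_set q b t (c # x')) t b \<alpha> c"
  define F where "F y = swap_blocks b (first_block b t c y) \<alpha> c y" for y
  note swap = swap_blocks_prec_set[OF assms, of _ t, folded S_def F_def]
  have S: "S \<subseteq> ?I" using swap(1) prec_set_subset unfolding S_def by blast
  have FS: "F ` S \<subseteq> ?I" using swap(2) by blast
  have "S \<inter> F ` S = {}" using swap(3) prec_set_disjoint[OF \<open>\<alpha> \<noteq> c\<close>] unfolding S_def by blast
  moreover have fin: "finite ?I" by (simp add: finite_ins_set)
  ultimately have "card (S \<union> F ` S) = card S + card (F ` S)"
    using finite_subset[OF S fin] finite_subset[OF FS fin] by (intro card_Un_disjoint)
  moreover have "inj_on F S"
  proof (rule inj_onI)
    fix y1 y2 assume "y1 \<in> S" "y2 \<in> S" "F y1 = F y2"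
    then have "first_block b t c y1 = first_block b t c y2" using swap(4) by metis
    then show "y1 = y2" using \<open>F y1 = F y2\<close> swap_blocks_involutory unfolding F_def by metis
  qed
  moreover have "card (S \<union> F ` S) \<le> card ?I" using S FS fin by (intro card_mono) auto
  ultimately show ?thesis unfolding S_def by (simp add: card_image)
qed

lemma card_Int_ins_set_le_Nplus:
  assumes "x \<in> seqs q n" and "y \<in> seqs q n" and "x \<noteq> y"
  shows "card (ins_set q b t x \<inter> ins_set q b t y) \<le> Nplus q b n t"
proof -
  let ?card = "\<lambda>(x, y). card (ins_set q b t x \<inter> ins_set q b t y)"
  let ?C = "{card (ins_set q b t x \<inter> ins_set q b t y) | x y. x \<in> seqs q n \<and> y \<in> seqs q n \<and> x \<noteq> y}"
  have "?C \<subseteq> ?card ` (seqs q n \<times> seqs q n)"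
  proof
    fix m assume "m \<in> ?C"
    then obtain x y where "m = ?card (x, y)" "(x, y) \<in> seqs q n \<times> seqs q n" by auto
    then show "m \<in> ?card ` (seqs q n \<times> seqs q n)" by (rule image_eqI)
  qed
  then have "finite ?C" by (rule finite_subset) (simp add: finite_seqs)
  moreover have "card (ins_set q b t x \<inter> ins_set q b t y) \<in> ?C" using assms by auto
  ultimately show ?thesis unfolding Nplus_def by (rule Max_ge)
qed

lemma two_card_prec_set_le_Nplus:
  assumes "c # x' \<in> seqs q n" and "U \<subseteq> ins_set q b t (c # x')"
    and "\<alpha> < q" and "\<alpha> \<noteq> c" and "0 < b"
  shows "2 * card (prec_set U t b \<alpha> c) \<le> Nplus q b n t"
proof -
  have "card (prec_set U t b \<alpha> c) \<le> card (prec_set (ins_set q b t (c # x')) t b \<alpha> c)"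
    using finite_subset[OF prec_set_subset finite_ins_set] prec_set_mono[OF assms(2)]
    by (rule card_mono)
  also have "2 * \<dots> \<le> card (ins_set q b t (c # x') \<inter> ins_set q b t (\<alpha> # x'))"
    using assms(1,3-5) by (intro two_card_prec_set_le_card_Int) (simp_all add: seqs_def)
  also have "\<dots> \<le> Nplus q b n t"
    using assms(1,3,4) by (intro card_Int_ins_set_le_Nplus) (simp_all add: seqs_def)
  finally show ?thesis by simp
qed

lemma card_prec_set_add:
  assumes "U \<subseteq> ins_set q b t (c # x')" and "\<alpha> \<noteq> c"
  shows "card U = card (prec_set U t b \<alpha> c) + card (prec_set U t b c \<alpha>)"
proof -
  have "\<exists>k\<le>t. y ! (k * b) = c" if "y \<in> U" for y
    using ins_set_Cons_anchor[of y q b t c x'] assms(1) that by blast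
  then have "U = prec_set U t b \<alpha> c \<union> prec_set U t b c \<alpha>" by (rule prec_set_Un)
  moreover have "finite U" using assms(1) finite_ins_set by (rule finite_subset)
  ultimately show ?thesis
    using card_Un_disjoint[OF _ _ prec_set_disjoint[OF assms(2)]] finite_subset[OF prec_set_subset]
    by metis
qed

theorem lemma3p6:
  fixes q b n t :: nat and x :: "nat list" and U :: "nat list set"
  assumes "n \<ge> 1" and "t \<ge> 1" and "q \<ge> 2" and "b \<ge> 2"
    and "x \<in> seqs q n"
    and "U \<subseteq> ins_set q b t x"
  shows "(\<forall>\<alpha> < q. \<alpha> \<noteq> x ! 0 \<longrightarrow>
            2 * card (prec_set U t b \<alpha> (x ! 0)) \<le> Nplus q b n t)
       \<and> (card U \<ge> Nplus q b n t + 1 \<longrightarrow>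
            (\<forall>\<alpha> < q. \<alpha> \<noteq> x ! 0 \<longrightarrow>
               card (prec_set U t b \<alpha> (x ! 0)) < card (prec_set U t b (x ! 0) \<alpha>)))"
proof -
  obtain c x' where x: "x = c # x'" using assms(1,5) by (cases x) (auto simp: seqs_def)
  have half: "2 * card (prec_set U t b \<alpha> c) \<le> Nplus q b n t" if "\<alpha> < q" "\<alpha> \<noteq> c" for \<alpha>
    using two_card_prec_set_le_Nplus assms(4-6) that unfolding x by simp
  show ?thesis unfolding x nth_Cons_0
  proof (intro conjI allI impI)
    fix \<alpha> assume "\<alpha> < q" "\<alpha> \<noteq> c"
    then show "2 * card (prec_set U t b \<alpha> c) \<le> Nplus q b n t" by (rule half)
  next
    fix \<alpha> assume "Nplus q b n t + 1 \<le> card U" "\<alpha> < q" "\<alpha> \<noteq> c"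
    then show "card (prec_set U t b \<alpha> c) < card (prec_set U t b c \<alpha>)"
      using half[OF \<open>\<alpha> < q\<close> \<open>\<alpha> \<noteq> c\<close>] card_prec_set_add[OF assms(6)[unfolded x] \<open>\<alpha> \<noteq> c\<close>]
      by linarith
  qed
qed

end
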